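(* For every language L_1 ∈ GRLOWJ there exists a language L_2 ∈ GLLOWJ such that L_1^R = L_2, and vice versa (for every L_2 ∈ GLLOWJ there exists L_1 ∈ GRLOWJ with L_2^R = L_1).
   Context: For a word w = a_1⋯a_n, w^R = a_n⋯a_1, and L^R = {w^R : w ∈ L}. A generalized right linear one-way jumping finite automaton (GRLOWJFA) is a tuple A = (Σ, Q, q_0, F, R) with alphabet Σ, finite state set Q, start state q_0, final states F ⊆ Q, and a finite set of rules R ⊂ Q × Σ^+ × Q such that for each p ∈ Q and w ∈ Σ^+ there is at most one q with (p,w,q) ∈ R (rule (p,w,q): from p, delete w, go to q). For p ∈ Q let Σ_p = {w ∈ Σ^+ : (p,w,q) ∈ R for some q}. Configurations are strings in Σ^* Q Σ^*, with moves: (1) for t,u,v ∈ Σ^* and (p,x,q) ∈ R, tpuxv ⇒ tuqv, provided u contains no word of Σ_p as a subword and there is no nonempty suffix u_2 of u and nonempty prefix x_1 of x with u_2x_1 = x; (2) for x ∈ Σ^+ and y ∈ Σ^* such that y contains no word of Σ_p as a subword, xpy ⇒ pxy. Accepted language: {w ∈ Σ^* : q_0 w ⇒^* q_f for some q_f ∈ F}. A generalized left linear one-way jumping finite automaton (GLLOWJFA) is a tuple A = (Σ, Q, q_0, F, R) with R ⊂ Q × Σ^+ × Q finite; a rule (q,w,p) means from p, delete w, go to q, and for each p and w there is at most one such q. For p ∈ Q let Σ_p = {w ∈ Σ^+ : (q,w,p) ∈ R for some q}. Configurations are strings in Σ^* Q Σ^*, with moves: (1) for t,u,v ∈ Σ^*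 and (q,x,p) ∈ R, vxupt moves to vqut, provided u contains no word of Σ_p as a subword and there is no nonempty prefix u_1 of u and nonempty suffix x_2 of x with x_2u_1 = x; (2) for x ∈ Σ^+ and y ∈ Σ^* such that y contains no word of Σ_p as a subword, ypx moves to yxp. Accepted language: {w ∈ Σ^* : w q_0 leads in zero or more moves to q_f for some q_f ∈ F}. GRLOWJ and GLLOWJ denote the classes of languages accepted by GRLOWJFA and GLLOWJFA respectively. *)

theory Defs
  imports Main "HOL-Library.Sublist"
begin

text \<open>Words are lists; configurations w1 q w2 are triples (w1, q, w2).
  "Subword" is read as contiguous factor (Sublist.sublist).\<close>

definition contains_none :: "'a list \<Rightarrow> 'a list set \<Rightarrow> bool" where
  "contains_none u S \<longleftrightarrow> (\<forall>w\<in>S. \<not> sublist w u)"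

definition GRLOWJFA :: "'a set \<Rightarrow> 'q set \<Rightarrow> 'q \<Rightarrow> 'q set \<Rightarrow> ('q \<times> 'a list \<times> 'q) set \<Rightarrow> bool" where
  "GRLOWJFA Sig Q q0 F R \<longleftrightarrow> finite Sig \<and> finite Q \<and> q0 \<in> Q \<and> F \<subseteq> Q \<and> finite R \<and>
     (\<forall>(p, w, q) \<in> R. p \<in> Q \<and> q \<in> Q \<and> w \<noteq> [] \<and> set w \<subseteq> Sig) \<and>
     (\<forall>p w q q'. (p, w, q) \<in> R \<and> (p, w, q') \<in> R \<longrightarrow> q = q')"

definition SigR :: "('q \<times> 'a list \<times> 'q) set \<Rightarrow> 'q \<Rightarrow> 'a list set" where
  "SigR R p = {w. w \<noteq> [] \<and> (\<exists>q. (p, w, q) \<in> R)}"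

definition rstep :: "('q \<times> 'a list \<times> 'q) set \<Rightarrow> ('a list \<times> 'q \<times> 'a list) \<Rightarrow> ('a list \<times> 'q \<times> 'a list) \<Rightarrow> bool" where
  "rstep R c c' \<longleftrightarrow>
     (\<exists>t u x v p q. (p, x, q) \<in> R \<and> c = (t, p, u @ x @ v) \<and> c' = (t @ u, q, v) \<and>
        contains_none u (SigR R p) \<and>
        \<not> (\<exists>u1 u2 x1 x2. u = u1 @ u2 \<and> x = x1 @ x2 \<and> u2 \<noteq> [] \<and> x1 \<noteq> [] \<and> u2 @ x1 = x))
   \<or> (\<exists>x y p. x \<noteq> [] \<and> contains_none y (SigR R p) \<and> c = (x, p, y) \<and> c' = ([], p, x @ y))"

definition rlang :: "'a set \<Rightarrow> 'q \<Rightarrow> 'q set \<Rightarrow> ('q \<times> 'a list \<times> 'q) set \<Rightarrow> 'a list set" where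
  "rlang Sig q0 F R = {w. w \<in> lists Sig \<and> (\<exists>qf\<in>F. (rstep R)\<^sup>*\<^sup>* ([], q0, w) ([], qf, []))}"

definition GRLOWJ :: "'a list set set" where
  "GRLOWJ = {L. \<exists>Sig (Q :: nat set) q0 F R. GRLOWJFA Sig Q q0 F R \<and> L = rlang Sig q0 F R}"

definition GLLOWJFA :: "'a set \<Rightarrow> 'q set \<Rightarrow> 'q \<Rightarrow> 'q set \<Rightarrow> ('q \<times> 'a list \<times> 'q) set \<Rightarrow> bool" where
  "GLLOWJFA Sig Q q0 F R \<longleftrightarrow> finite Sig \<and> finite Q \<and> q0 \<in> Q \<and> F \<subseteq> Q \<and> finite R \<and>
     (\<forall>(q, w, p) \<in> R. p \<in> Q \<and> q \<in> Q \<and> w \<noteq> [] \<and> set w \<subseteq> Sig) \<and>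
     (\<forall>p w q q'. (q, w, p) \<in> R \<and> (q', w, p) \<in> R \<longrightarrow> q = q')"

definition SigL :: "('q \<times> 'a list \<times> 'q) set \<Rightarrow> 'q \<Rightarrow> 'a list set" where
  "SigL R p = {w. w \<noteq> [] \<and> (\<exists>q. (q, w, p) \<in> R)}"

definition lstep :: "('q \<times> 'a list \<times> 'q) set \<Rightarrow> ('a list \<times> 'q \<times> 'a list) \<Rightarrow> ('a list \<times> 'q \<times> 'a list) \<Rightarrow> bool" where
  "lstep R c c' \<longleftrightarrow>
     (\<exists>t u x v p q. (q, x, p) \<in> R \<and> c = (v @ x @ u, p, t) \<and> c' = (v, q, u @ t) \<and>
        contains_none u (SigL R p) \<and>
        \<not> (\<exists>u1 u2 x1 x2. u = u1 @ u2 \<and> x = x1 @ x2 \<and> u1 \<noteq> [] \<and> x2 \<noteq> [] \<and> x2 @ u1 = x))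
   \<or> (\<exists>x y p. x \<noteq> [] \<and> contains_none y (SigL R p) \<and> c = (y, p, x) \<and> c' = (y @ x, p, []))"

definition llang :: "'a set \<Rightarrow> 'q \<Rightarrow> 'q set \<Rightarrow> ('q \<times> 'a list \<times> 'q) set \<Rightarrow> 'a list set" where
  "llang Sig q0 F R = {w. w \<in> lists Sig \<and> (\<exists>qf\<in>F. (lstep R)\<^sup>*\<^sup>* (w, q0, []) ([], qf, []))}"

definition GLLOWJ :: "'a list set set" where
  "GLLOWJ = {L. \<exists>Sig (Q :: nat set) q0 F R. GLLOWJFA Sig Q q0 F R \<and> L = llang Sig q0 F R}"

end

theory Submission
  imports Defs
begin

text \<open>Reverse every rule, (p, w, q) becoming (q, rev w, p), and mirror every configuration,
  (w1, q, w2) becoming (rev w2, q, rev w1). Both side conditions of a jump survive reversal: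
  u contains no word of Sigma_p iff rev u contains no reversed one, and a nonempty suffix of u
  overlapping a prefix of x becomes a nonempty prefix of rev u overlapping a suffix of rev x.
  Hence the right linear steps of an automaton are exactly the mirrored left linear steps of
  its reversal, and the accepting computations on w and on rev w correspond.\<close>

definition rev_rules :: "('q \<times> 'a list \<times> 'q) set \<Rightarrow> ('q \<times> 'a list \<times> 'q) set" where
  "rev_rules R = (\<lambda>(p, w, q). (q, rev w, p)) ` R"

fun rev_config :: "'a list \<times> 'q \<times> 'a list \<Rightarrow> 'a list \<times> 'q \<times> 'a list" where
  "rev_config (a, p, b) = (rev b, p, rev a)"

lemma rev_rules_iff: "(q, w, p) \<in> rev_rules R \<longleftrightarrow> (p, rev w, q) \<in> R"
  unfolding rev_rules_def by (force intro: rev_image_eqI)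

lemma rev_rules_rev_rules [simp]: "rev_rules (rev_rules R) = R"
  by (auto simp: rev_rules_iff)

lemma rev_config_rev_config [simp]: "rev_config (rev_config c) = c"
  by (cases c) simp

lemma SigL_rev_rules: "SigL (rev_rules R) p = rev ` SigR R p"
  unfolding SigL_def SigR_def by (force simp: rev_rules_iff intro: rev_image_eqI)

lemma SigR_rev_rules: "SigR (rev_rules R) p = rev ` SigL R p"
  unfolding SigL_def SigR_def by (force simp: rev_rules_iff intro: rev_image_eqI)

lemma contains_none_rev: "contains_none (rev u) (rev ` S) \<longleftrightarrow> contains_none u S"
  unfolding contains_none_def by auto

lemma suffix_prefix_overlap_rev:
  "(\<exists>u1 u2 x1 x2. rev u = u1 @ u2 \<and> rev x = x1 @ x2 \<and> u1 \<noteq> [] \<and> x2 \<noteq> [] \<and> x2 @ u1 = rev x)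
   \<longleftrightarrow> (\<exists>u1 u2 x1 x2. u = u1 @ u2 \<and> x = x1 @ x2 \<and> u2 \<noteq> [] \<and> x1 \<noteq> [] \<and> u2 @ x1 = x)"
  (is "?left \<longleftrightarrow> ?right")
proof
  assume ?left
  then obtain u1 u2 x1 x2 where "rev u = u1 @ u2" "rev x = x1 @ x2" "u1 \<noteq> []" "x2 \<noteq> []"
    "x2 @ u1 = rev x" by blast
  then have "u = rev u2 @ rev u1 \<and> x = rev x2 @ rev x1 \<and> rev u1 \<noteq> [] \<and> rev x2 \<noteq> []
      \<and> rev u1 @ rev x2 = x"
    by (metis rev_append rev_is_Nil_conv rev_rev_ident)
  then show ?right by blast
next
  assume ?right
  then obtain u1 u2 x1 x2 where "u = u1 @ u2" "x = x1 @ x2" "u2 \<noteq> []" "x1 \<noteq> []"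
    "u2 @ x1 = x" by blast
  then have "rev u = rev u2 @ rev u1 \<and> rev x = rev x2 @ rev x1 \<and> rev u2 \<noteq> [] \<and> rev x1 \<noteq> []
      \<and> rev x1 @ rev u2 = rev x"
    by (metis rev_append rev_is_Nil_conv)
  then show ?left by blast
qed

lemma lstep_rev_rules_if_rstep:
  assumes "rstep R c c'"
  shows "lstep (rev_rules R) (rev_config c) (rev_config c')"
  using assms unfolding rstep_def
proof (elim disjE exE conjE)
  fix t u x v p q
  assume rule: "(p, x, q) \<in> R" and configs: "c = (t, p, u @ x @ v)" "c' = (t @ u, q, v)"
    and avoids: "contains_none u (SigR R p)"
    and no_overlap: "\<not> (\<exists>u1 u2 x1 x2. u = u1 @ u2 \<and> x = x1 @ x2 \<and> u2 \<noteq> [] \<and> x1 \<noteq> [] \<and> u2 @ x1 = x)"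
  have "(q, rev x, p) \<in> rev_rules R"
    using rule by (simp add: rev_rules_iff)
  moreover have "contains_none (rev u) (SigL (rev_rules R) p)"
    using avoids by (simp add: SigL_rev_rules contains_none_rev)
  moreover have "\<not> (\<exists>u1 u2 x1 x2. rev u = u1 @ u2 \<and> rev x = x1 @ x2 \<and> u1 \<noteq> [] \<and> x2 \<noteq> []
      \<and> x2 @ u1 = rev x)"
    using no_overlap suffix_prefix_overlap_rev[of u x] by blast
  ultimately show ?thesis
    unfolding lstep_def configs by fastforce
next
  fix x y p
  assume "x \<noteq> []" "contains_none y (SigR R p)" "c = (x, p, y)" "c' = ([], p, x @ y)"
  then show ?thesis
    unfolding lstep_def by (simp add: SigL_rev_rules contains_none_rev)
qed

lemma rstep_rev_rules_if_lstep:
  assumes "lstep R c c'"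
  shows "rstep (rev_rules R) (rev_config c) (rev_config c')"
  using assms unfolding lstep_def
proof (elim disjE exE conjE)
  fix t u x v p q
  assume rule: "(q, x, p) \<in> R" and configs: "c = (v @ x @ u, p, t)" "c' = (v, q, u @ t)"
    and avoids: "contains_none u (SigL R p)"
    and no_overlap: "\<not> (\<exists>u1 u2 x1 x2. u = u1 @ u2 \<and> x = x1 @ x2 \<and> u1 \<noteq> [] \<and> x2 \<noteq> [] \<and> x2 @ u1 = x)"
  have "(p, rev x, q) \<in> rev_rules R"
    using rule by (simp add: rev_rules_iff)
  moreover have "contains_none (rev u) (SigR (rev_rules R) p)"
    using avoids by (simp add: SigR_rev_rules contains_none_rev)
  moreover have "\<not> (\<exists>u1 u2 x1 x2. rev u = u1 @ u2 \<and> rev x = x1 @ x2 \<and> u2 \<noteq> [] \<and> x1 \<noteq> []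
      \<and> u2 @ x1 = rev x)"
    using no_overlap suffix_prefix_overlap_rev[of "rev u" "rev x", unfolded rev_rev_ident]
    by blast
  ultimately show ?thesis
    unfolding rstep_def configs by fastforce
next
  fix x y p
  assume "x \<noteq> []" "contains_none y (SigL R p)" "c = (y, p, x)" "c' = (y @ x, p, [])"
  then show ?thesis
    unfolding rstep_def by (simp add: SigR_rev_rules contains_none_rev)
qed

lemma lstep_rev_rules_iff: "lstep (rev_rules R) c c' \<longleftrightarrow> rstep R (rev_config c) (rev_config c')"
  using lstep_rev_rules_if_rstep[of R "rev_config c" "rev_config c'"]
    rstep_rev_rules_if_lstep[of "rev_rules R" c c']
  by auto

lemma rtranclp_map:
  assumes "\<And>a b. r a b \<Longrightarrow> s (f a) (f b)" and "r\<^sup>*\<^sup>* a b"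
  shows "s\<^sup>*\<^sup>* (f a) (f b)"
  using assms(2) by induction (auto intro: rtranclp.rtrancl_into_rtrancl assms(1))

lemma rtranclp_lstep_rev_rules_iff:
  "(lstep (rev_rules R))\<^sup>*\<^sup>* c c' \<longleftrightarrow> (rstep R)\<^sup>*\<^sup>* (rev_config c) (rev_config c')"
  using rtranclp_map[of "lstep (rev_rules R)" "rstep R" rev_config c c']
    rtranclp_map[of "rstep R" "lstep (rev_rules R)" rev_config "rev_config c" "rev_config c'"]
  by (auto simp: lstep_rev_rules_iff)

lemma mem_rev_image_iff: "w \<in> rev ` A \<longleftrightarrow> rev w \<in> A"
  using inj_image_mem_iff[OF inj_on_rev, of "rev w" A] by simp

lemma llang_rev_rules: "llang Sig q0 F (rev_rules R) = rev ` rlang Sig q0 F R"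
  unfolding set_eq_iff mem_rev_image_iff llang_def rlang_def
  by (simp add: rtranclp_lstep_rev_rules_iff in_lists_conv_set)

lemma rlang_rev_rules: "rlang Sig q0 F (rev_rules R) = rev ` llang Sig q0 F R"
proof -
  have "llang Sig q0 F R = rev ` rlang Sig q0 F (rev_rules R)"
    using llang_rev_rules[of Sig q0 F "rev_rules R"] by simp
  then show ?thesis
    by (simp add: image_image)
qed

lemma GLLOWJFA_rev_rules: "GRLOWJFA Sig Q q0 F R \<Longrightarrow> GLLOWJFA Sig Q q0 F (rev_rules R)"
  unfolding GRLOWJFA_def GLLOWJFA_def by (auto simp: rev_rules_iff rev_rules_def) fastforce+

lemma GRLOWJFA_rev_rules: "GLLOWJFA Sig Q q0 F R \<Longrightarrow> GRLOWJFA Sig Q q0 F (rev_rules R)"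
  unfolding GRLOWJFA_def GLLOWJFA_def by (auto simp: rev_rules_iff rev_rules_def) fastforce+

theorem proposition1:
  shows "(\<forall>L1 \<in> (GRLOWJ :: 'a list set set). \<exists>L2 \<in> GLLOWJ. rev ` L1 = L2) \<and>
         (\<forall>L2 \<in> (GLLOWJ :: 'a list set set). \<exists>L1 \<in> GRLOWJ. rev ` L2 = L1)"
proof safe
  fix L1 :: "'a list set"
  assume "L1 \<in> GRLOWJ"
  then obtain Sig and Q :: "nat set" and q0 F R
    where automaton: "GRLOWJFA Sig Q q0 F R" and L1: "L1 = rlang Sig q0 F R"
    unfolding GRLOWJ_def by blast
  have "llang Sig q0 F (rev_rules R) \<in> GLLOWJ"
    unfolding GLLOWJ_def using GLLOWJFA_rev_rules[OF automaton] by blast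
  then show "\<exists>L2\<in>GLLOWJ. rev ` L1 = L2"
    by (simp add: L1 llang_rev_rules)
next
  fix L2 :: "'a list set"
  assume "L2 \<in> GLLOWJ"
  then obtain Sig and Q :: "nat set" and q0 F R
    where automaton: "GLLOWJFA Sig Q q0 F R" and L2: "L2 = llang Sig q0 F R"
    unfolding GLLOWJ_def by blast
  have "rlang Sig q0 F (rev_rules R) \<in> GRLOWJ"
    unfolding GRLOWJ_def using GRLOWJFA_rev_rules[OF automaton] by blast
  then show "\<exists>L1\<in>GRLOWJ. rev ` L2 = L1"
    by (simp add: L2 rlang_rev_rules)
qed

end
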